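(* If there exists an ${}^\alpha\mathrm{H}_t(m,n;s,k)$, then for every positive divisor $\lambda$ of $t$ there exists a ${}^{\lambda\alpha}\mathrm{H}_{t/\lambda}(m,n;s,k)$. More precisely, if $A$ is an ${}^\alpha\mathrm{H}_t(m,n;s,k)$ over $\mathbb{Z}_v$ with $v=\frac{2nk}{\alpha}+t$, then the array obtained from $A$ by reducing every entry modulo $\frac{v}{\lambda}$ (i.e. applying the natural projection $\mathbb{Z}_v\to\mathbb{Z}_{v/\lambda}$) is a ${}^{\lambda\alpha}\mathrm{H}_{t/\lambda}(m,n;s,k)$ over $\mathbb{Z}_{v/\lambda}$.
   Context: For positive integers $m,n,s,k,\lambda,t$ with $t$ dividing $\frac{2nk}{\lambda}$, let $v=\frac{2nk}{\lambda}+t$ and $J$ the subgroup of $\mathbb{Z}_v$ of order $t$. A $\lambda$-fold Heffter array over $\mathbb{Z}_v$ relative to $J$, denoted ${}^\lambda\mathrm{H}_t(m,n;s,k)$, is an $m\times n$ partially filled array with entries in $\mathbb{Z}_v$ such that: (a) each row has exactly $s$ and each column exactly $k$ filled cells; (b) the multiset $\{\pm x: x$ an entry of a filled cell$\}$ (counted over all filled cells) contains each element of $\mathbb{Z}_v\setminus J$ exactly $\lambda$ times and no element of $J$; (c) every row and every column sums to $0$ in $\mathbb{Z}_v$. (When $\lambda=1$ this is a relative Heffter array $\mathrm{H}_t(m,n;s,k)$.) *)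

theory Defs
  imports Main
begin

text \<open>A partially filled m x n array with entries in Z_v is modelled as
  A :: nat => nat => int option; A i j = None means cell (i,j) is empty,
  A i j = Some a means it holds the residue class of a, where a is the
  canonical representative in {0..<v}.\<close>

definition heffter_order :: "nat \<Rightarrow> nat \<Rightarrow> nat \<Rightarrow> nat \<Rightarrow> nat" where
  "heffter_order lam t n k = 2 * n * k div lam + t"

definition pm_count :: "(nat \<Rightarrow> nat \<Rightarrow> int option) \<Rightarrow> nat \<Rightarrow> nat \<Rightarrow> int \<Rightarrow> int \<Rightarrow> nat" where
  "pm_count A m n v x =
     card {(i, j). i < m \<and> j < n \<and> (\<exists>a. A i j = Some a \<and> a mod v = x mod v)}
   + card {(i, j). i < m \<and> j < n \<and> (\<exists>a. A i j = Some a \<and> (- a) mod v = x mod v)}"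

text \<open>The subgroup J of Z_v of order t (t dividing v) is the set of multiples of v/t.\<close>
definition lambda_fold_heffter ::
  "nat \<Rightarrow> nat \<Rightarrow> nat \<Rightarrow> nat \<Rightarrow> nat \<Rightarrow> nat \<Rightarrow> (nat \<Rightarrow> nat \<Rightarrow> int option) \<Rightarrow> bool" where
  "lambda_fold_heffter lam t m n s k A \<longleftrightarrow>
     (let v = heffter_order lam t n k in
      0 < m \<and> 0 < n \<and> 0 < s \<and> 0 < k \<and> 0 < lam \<and> 0 < t \<and>
      lam dvd 2 * n * k \<and> t dvd (2 * n * k div lam) \<and>
      (\<forall>i j. (i \<ge> m \<or> j \<ge> n) \<longrightarrow> A i j = None) \<and>
      (\<forall>i j a. A i j = Some a \<longrightarrow> 0 \<le> a \<and> a < int v) \<and>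
      (\<forall>i<m. card {j. j < n \<and> A i j \<noteq> None} = s) \<and>
      (\<forall>j<n. card {i. i < m \<and> A i j \<noteq> None} = k) \<and>
      (\<forall>x::int. 0 \<le> x \<and> x < int v \<longrightarrow>
          pm_count A m n (int v) x = (if int (v div t) dvd x then 0 else lam)) \<and>
      (\<forall>i<m. (\<Sum>j\<in>{j. j < n \<and> A i j \<noteq> None}. the (A i j)) mod int v = 0) \<and>
      (\<forall>j<n. (\<Sum>i\<in>{i. i < m \<and> A i j \<noteq> None}. the (A i j)) mod int v = 0))"

end

theory Submission
  imports Defs
begin

text \<open>Write \<open>v = \<lambda>w\<close> and \<open>t = \<lambda>r\<close>. Reduction \<open>\<int>\<^sub>v \<rightarrow> \<int>\<^sub>w\<close> is a homomorphism, so row and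
  column sums stay zero, and each residue \<open>x\<close> of \<open>\<int>\<^sub>w\<close> has exactly the \<open>\<lambda>\<close> preimages
  \<open>x + jw\<close> (\<open>j < \<lambda>\<close>). Since \<open>v/t = w/r\<close> divides \<open>w\<close>, either all of these preimages lie
  in \<open>J\<close> or none does, according as \<open>x\<close> lies in the subgroup of \<open>\<int>\<^sub>w\<close> of order \<open>r\<close>. Hence every
  \<open>x\<close> outside that subgroup is hit \<open>\<lambda>\<alpha>\<close> times by the signed entries and no element of it
  is hit at all.\<close>

definition array_mod :: "int \<Rightarrow> (nat \<Rightarrow> nat \<Rightarrow> int option) \<Rightarrow> nat \<Rightarrow> nat \<Rightarrow> int option" where
  "array_mod w A = (\<lambda>i j. map_option (\<lambda>a. a mod w) (A i j))"

definition filled_cells :: "(nat \<Rightarrow> nat \<Rightarrow> int option) \<Rightarrow> nat \<Rightarrow> nat \<Rightarrow> (nat \<times> nat) set" where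
  "filled_cells A m n = {(i, j). i < m \<and> j < n \<and> A i j \<noteq> None}"

definition entry :: "(nat \<Rightarrow> nat \<Rightarrow> int option) \<Rightarrow> nat \<times> nat \<Rightarrow> int" where
  "entry A c = the (A (fst c) (snd c))"

lemma finite_filled_cells: "finite (filled_cells A m n)"
  by (rule finite_subset[of _ "{..<m} \<times> {..<n}"]) (auto simp: filled_cells_def)

lemma filled_cells_array_mod [simp]: "filled_cells (array_mod w A) m n = filled_cells A m n"
  by (simp add: filled_cells_def array_mod_def)

lemma entry_array_mod:
  "c \<in> filled_cells A m n \<Longrightarrow> entry (array_mod w A) c = entry A c mod w"
  by (auto simp: filled_cells_def array_mod_def entry_def)

lemma pm_count_eq_card_filled_cells:
  "pm_count A m n v x =
     card {c \<in> filled_cells A m n. entry A c mod v = x mod v}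
   + card {c \<in> filled_cells A m n. (- entry A c) mod v = x mod v}"
proof -
  have "{(i, j). i < m \<and> j < n \<and> (\<exists>a. A i j = Some a \<and> g a mod v = x mod v)}
      = {c \<in> filled_cells A m n. g (entry A c) mod v = x mod v}" for g :: "int \<Rightarrow> int"
    by (auto simp: filled_cells_def entry_def)
  from this[of "\<lambda>a. a"] this[of uminus] show ?thesis
    by (simp add: pm_count_def)
qed

lemma card_mod_eq_sum_card_lifts:
  fixes f :: "'c \<Rightarrow> int"
  assumes "finite C" and "0 < w" and "0 < lam" and "0 \<le> x" "x < w"
  shows "card {c \<in> C. f c mod w = x} = (\<Sum>j<lam. card {c \<in> C. f c mod (int lam * w) = x + int j * w})"
proof -
  let ?v = "int lam * w"
  have lifts: "y mod w = x \<longleftrightarrow> (\<exists>j<lam. y = x + int j * w)" if "0 \<le> y" "y < ?v" for y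
  proof
    assume y: "y mod w = x"
    have "y = x + (y div w) * w" using y div_mult_mod_eq[of y w] by linarith
    moreover have "0 \<le> y div w"
      using that \<open>0 < w\<close> by (simp add: pos_imp_zdiv_nonneg_iff)
    moreover have "y div w < int lam"
    proof -
      have "y div w * w \<le> y"
        using \<open>0 < w\<close> div_mult_mod_eq[of y w] pos_mod_sign[of w y] by linarith
      with \<open>y < ?v\<close> have "y div w * w < int lam * w" by linarith
      with \<open>0 < w\<close> show ?thesis by (simp add: mult_less_cancel_right)
    qed
    ultimately show "\<exists>j<lam. y = x + int j * w"
      by (intro exI[of _ "nat (y div w)"]) auto
  qed (use assms in auto)
  have "{c \<in> C. f c mod w = x} = (\<Union>j<lam. {c \<in> C. f c mod ?v = x + int j * w})"
  proof -
    have "f c mod w = x \<longleftrightarrow> (\<exists>j<lam. f c mod ?v = x + int j * w)" for c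
      using lifts[of "f c mod ?v"] assms by (simp add: mod_mod_cancel)
    then show ?thesis by blast
  qed
  moreover have "card (\<Union>j<lam. {c \<in> C. f c mod ?v = x + int j * w})
      = (\<Sum>j<lam. card {c \<in> C. f c mod ?v = x + int j * w})"
    by (rule card_UN_disjoint) (use assms in auto)
  ultimately show ?thesis by simp
qed

lemma pm_count_array_mod:
  assumes "0 < w" and "0 < lam" and "0 \<le> x" "x < w"
  shows "pm_count (array_mod w A) m n w x = (\<Sum>j<lam. pm_count A m n (int lam * w) (x + int j * w))"
proof -
  let ?F = "filled_cells A m n" and ?v = "int lam * w"
  have lift_mod: "(x + int j * w) mod ?v = x + int j * w" if "j < lam" for j
  proof -
    have "x + int j * w < int (Suc j) * w" using \<open>x < w\<close> by (simp add: algebra_simps)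
    also have "\<dots> \<le> ?v" using that \<open>0 < w\<close> by (intro mult_right_mono) auto
    finally show ?thesis using \<open>0 \<le> x\<close> \<open>0 < w\<close> by simp
  qed
  have "pm_count (array_mod w A) m n w x
      = card {c \<in> ?F. entry A c mod w = x} + card {c \<in> ?F. (- entry A c) mod w = x}"
    unfolding pm_count_eq_card_filled_cells using assms
    by (simp add: entry_array_mod mod_minus_eq cong: conj_cong)
  also have "\<dots> = (\<Sum>j<lam. card {c \<in> ?F. entry A c mod ?v = x + int j * w}
                        + card {c \<in> ?F. (- entry A c) mod ?v = x + int j * w})"
    using assms by (simp add: card_mod_eq_sum_card_lifts finite_filled_cells sum.distrib)
  also have "\<dots> = (\<Sum>j<lam. pm_count A m n ?v (x + int j * w))"
    by (rule sum.cong) (simp_all add: pm_count_eq_card_filled_cells lift_mod)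
  finally show ?thesis .
qed

lemma pm_count_array_mod_cover:
  assumes cover: "\<forall>y. 0 \<le> y \<and> y < int lam * w \<longrightarrow>
                    pm_count A m n (int lam * w) y = (if d dvd y then 0 else alpha)"
    and "0 < w" and "0 < lam" and "d dvd w" and "0 \<le> x" "x < w"
  shows "pm_count (array_mod w A) m n w x = (if d dvd x then 0 else lam * alpha)"
proof -
  have "pm_count A m n (int lam * w) (x + int j * w) = (if d dvd x then 0 else alpha)"
    if "j < lam" for j
  proof -
    have "x + int j * w < int lam * w"
      using that \<open>x < w\<close> \<open>0 < w\<close> mult_right_mono[of "int (Suc j)" "int lam" w]
      by (simp add: algebra_simps)
    moreover have "d dvd x + int j * w \<longleftrightarrow> d dvd x"
      using \<open>d dvd w\<close> by (simp add: dvd_add_left_iff)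
    ultimately show ?thesis using cover \<open>0 \<le> x\<close> \<open>0 < w\<close> by simp
  qed
  then show ?thesis using assms by (simp add: pm_count_array_mod)
qed

lemma sum_map_option_mod_eq_0:
  fixes g :: "'a \<Rightarrow> 'b::euclidean_semiring_cancel option"
  assumes "(\<Sum>x\<in>{x. P x \<and> g x \<noteq> None}. the (g x)) mod v = 0" and "w dvd v"
  shows "(\<Sum>x\<in>{x. P x \<and> g x \<noteq> None}. the (map_option (\<lambda>a. a mod w) (g x))) mod w = 0"
proof -
  let ?S = "{x. P x \<and> g x \<noteq> None}"
  have "(\<Sum>x\<in>?S. the (map_option (\<lambda>a. a mod w) (g x))) = (\<Sum>x\<in>?S. the (g x) mod w)"
    by (rule sum.cong) auto
  also have "\<dots> mod w = (\<Sum>x\<in>?S. the (g x)) mod w"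
    by (rule mod_sum_eq)
  also have "\<dots> = 0"
    using assms by (meson dvd_trans mod_0_imp_dvd dvd_imp_mod_0)
  finally show ?thesis .
qed

lemma heffter_order_mult:
  assumes "0 < lam" and "lam dvd t" and "0 < t" and "0 < alpha"
    and "alpha dvd 2 * n * k" and "t dvd 2 * n * k div alpha"
  shows "heffter_order alpha t n k = lam * heffter_order (lam * alpha) (t div lam) n k"
    and "heffter_order alpha t n k div t = heffter_order (lam * alpha) (t div lam) n k div (t div lam)"
    and "lam * alpha dvd 2 * n * k"
    and "t div lam dvd 2 * n * k div (lam * alpha)"
    and "0 < heffter_order (lam * alpha) (t div lam) n k"
    and "heffter_order (lam * alpha) (t div lam) n k div (t div lam)
           dvd heffter_order (lam * alpha) (t div lam) n k"
proof -
  obtain q where q: "2 * n * k div alpha = t * q" using assms(6) by blast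
  obtain r where r: "t = lam * r" using assms(2) by blast
  have "2 * n * k = alpha * (t * q)" using q assms(5) by (metis dvd_mult_div_cancel)
  then have nk: "2 * n * k = (lam * alpha) * (r * q)" using r by simp
  then have new: "2 * n * k div (lam * alpha) = r * q"
    using assms(1,4) by (simp only: nk) simp
  have "r > 0" using r assms(3) by simp
  have V: "heffter_order alpha t n k = lam * (r * (q + 1))"
    unfolding heffter_order_def using q r by (simp add: algebra_simps)
  have W: "heffter_order (lam * alpha) (t div lam) n k = r * (q + 1)"
    unfolding heffter_order_def using new r assms(1) by (simp add: algebra_simps)
  show "heffter_order alpha t n k = lam * heffter_order (lam * alpha) (t div lam) n k"
    using V W by simp
  show "heffter_order alpha t n k div t = heffter_order (lam * alpha) (t div lam) n k div (t div lam)"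
    using V W r assms(1) \<open>r > 0\<close> by simp
  show "lam * alpha dvd 2 * n * k" using nk by (metis dvd_triv_left)
  show "t div lam dvd 2 * n * k div (lam * alpha)" using new r assms(1) by simp
  show "0 < heffter_order (lam * alpha) (t div lam) n k" using W \<open>r > 0\<close> by simp
  show "heffter_order (lam * alpha) (t div lam) n k div (t div lam)
          dvd heffter_order (lam * alpha) (t div lam) n k"
    using W r assms(1) \<open>r > 0\<close> by (simp del: mult_Suc_right)
qed

theorem theorem4p4:
  fixes alpha t m n s k lam :: nat and A :: "nat \<Rightarrow> nat \<Rightarrow> int option"
  assumes "lambda_fold_heffter alpha t m n s k A"
    and "0 < lam" and "lam dvd t"
  shows "lambda_fold_heffter (lam * alpha) (t div lam) m n s k
           (\<lambda>i j. map_option (\<lambda>a. a mod int (heffter_order alpha t n k div lam)) (A i j))"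
proof -
  define w where "w = heffter_order (lam * alpha) (t div lam) n k"
  note H = assms(1)[unfolded lambda_fold_heffter_def Let_def]
  have params: "0 < t" "0 < alpha" "alpha dvd 2 * n * k" "t dvd 2 * n * k div alpha"
    using H by auto
  note order = heffter_order_mult[OF assms(2,3) params, folded w_def]
  have "0 < t div lam" using params(1) assms(3) by (auto elim: dvdE)
  have J_dvd: "int (w div (t div lam)) dvd int w" using order(6) by simp
  let ?B = "array_mod (int w) A"
  have cover: "pm_count ?B m n (int w) x = (if int (w div (t div lam)) dvd x then 0 else lam * alpha)"
    if "0 \<le> x" "x < int w" for x
    by (rule pm_count_array_mod_cover[OF _ _ assms(2) J_dvd that])
      (use H order(1,2,5) in auto)
  have w_dvd: "int w dvd int (heffter_order alpha t n k)" using order(1) by simp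
  have row_sums: "(\<Sum>j\<in>{j. j < n \<and> ?B i j \<noteq> None}. the (?B i j)) mod int w = 0"
    if "i < m" for i
    unfolding array_mod_def option.map_disc_iff
    by (rule sum_map_option_mod_eq_0[OF _ w_dvd]) (use H that in auto)
  have col_sums: "(\<Sum>i\<in>{i. i < m \<and> ?B i j \<noteq> None}. the (?B i j)) mod int w = 0"
    if "j < n" for j
    unfolding array_mod_def option.map_disc_iff
    by (rule sum_map_option_mod_eq_0[OF _ w_dvd]) (use H that in auto)
  have "heffter_order alpha t n k div lam = w" using order(1) assms(2) by simp
  moreover have "lambda_fold_heffter (lam * alpha) (t div lam) m n s k ?B"
    unfolding lambda_fold_heffter_def Let_def w_def[symmetric]
    using H assms(2) params order \<open>0 < t div lam\<close> cover row_sums col_sums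
    by (auto simp: array_mod_def)
  ultimately show ?thesis by (simp add: array_mod_def)
qed

end
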